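(* $H$ is constant on each connected component of $\Gamma$.
   Context: Let $G=(\mathbb{V},E)$ be a finite graph with adjacency $\sim$. Let $a_{ij}=a_{ji}\ge0$ ($>0$ only if $i\sim j$) and $p_{ij}=p_{ji}\in[0,1]$ ($=0$ if $i\not\sim j$), with some $a_{ij}p_{ij}>0$. Fix $h_1\in(0,1]$; $\Delta$ is the set of arrays $x=(x_{ij})_{i,j\in\mathbb{V}}$ with $x_{ij}=x_{ji}\ge0$, $x_{ij}=0$ if $i\not\sim j$, $\sum_{i,j}x_{ij}=1$, $\sum_{(i,j):a_{ij}p_{ij}>0}x_{ij}\ge h_1$; $x_i=\sum_jx_{ij}$. $H(x)=\sum_{(i,j):x_{ij}>0}a_{ij}p_{ij}x_{ij}^2/(x_ix_j)$; $F(x)_{ij}=x_{ij}\big(a_{ij}p_{ij}\frac{x_{ij}}{x_ix_j}-H(x)\big)$, with $F_{ij}=0$ if $x_{ij}=0$ and $a_{ij}p_{ij}x_{ij}/(x_ix_j):=0$ if $a_{ij}p_{ij}=0$. $\Gamma=\{x\in\Delta:F(x)=0\}$ (with the topology induced from $\mathbb{R}^{\mathbb{V}\times\mathbb{V}}$). *)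

theory Defs
  imports "HOL-Analysis.Analysis"
begin

text \<open>Arrays x = (x_ij) indexed by V x V are functions on pairs of vertices,
  carrying the product (= Euclidean, since V is finite) topology.\<close>

definition vdeg :: "('v::finite \<times> 'v \<Rightarrow> real) \<Rightarrow> 'v \<Rightarrow> real" where
  "vdeg x i = (\<Sum>j\<in>UNIV. x (i, j))"

definition Hfun :: "('v::finite \<Rightarrow> 'v \<Rightarrow> real) \<Rightarrow> ('v \<Rightarrow> 'v \<Rightarrow> real)
    \<Rightarrow> ('v \<times> 'v \<Rightarrow> real) \<Rightarrow> real" where
  "Hfun a p x = (\<Sum>(i,j)\<in>{(i,j). x (i,j) > 0}.
      a i j * p i j * (x (i,j))\<^sup>2 / (vdeg x i * vdeg x j))"

definition ratio :: "('v::finite \<Rightarrow> 'v \<Rightarrow> real) \<Rightarrow> ('v \<Rightarrow> 'v \<Rightarrow> real)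
    \<Rightarrow> ('v \<times> 'v \<Rightarrow> real) \<Rightarrow> 'v \<Rightarrow> 'v \<Rightarrow> real" where
  "ratio a p x i j = (if a i j * p i j = 0 then 0
      else a i j * p i j * x (i,j) / (vdeg x i * vdeg x j))"

definition Ffun :: "('v::finite \<Rightarrow> 'v \<Rightarrow> real) \<Rightarrow> ('v \<Rightarrow> 'v \<Rightarrow> real)
    \<Rightarrow> ('v \<times> 'v \<Rightarrow> real) \<Rightarrow> ('v \<times> 'v \<Rightarrow> real)" where
  "Ffun a p x = (\<lambda>(i,j). if x (i,j) = 0 then 0
      else x (i,j) * (ratio a p x i j - Hfun a p x))"

definition Delta :: "('v::finite \<Rightarrow> 'v \<Rightarrow> bool) \<Rightarrow> ('v \<Rightarrow> 'v \<Rightarrow> real)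
    \<Rightarrow> ('v \<Rightarrow> 'v \<Rightarrow> real) \<Rightarrow> real \<Rightarrow> ('v \<times> 'v \<Rightarrow> real) set" where
  "Delta adj a p h1 = {x.
      (\<forall>i j. x (i,j) = x (j,i)) \<and> (\<forall>i j. x (i,j) \<ge> 0) \<and>
      (\<forall>i j. \<not> adj i j \<longrightarrow> x (i,j) = 0) \<and>
      (\<Sum>ij\<in>UNIV. x ij) = 1 \<and>
      (\<Sum>(i,j)\<in>{(i,j). a i j * p i j > 0}. x (i,j)) \<ge> h1}"

definition Gamma :: "('v::finite \<Rightarrow> 'v \<Rightarrow> bool) \<Rightarrow> ('v \<Rightarrow> 'v \<Rightarrow> real)
    \<Rightarrow> ('v \<Rightarrow> 'v \<Rightarrow> real) \<Rightarrow> real \<Rightarrow> ('v \<times> 'v \<Rightarrow> real) set" where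
  "Gamma adj a p h1 = {x \<in> Delta adj a p h1. Ffun a p x = (\<lambda>_. 0)}"

end

theory Submission
  imports Defs
begin

text \<open>At every point x of \<Gamma> and every entry x_ij > 0 the equation F(x)_ij = 0 reads
  H(x) = a_ij p_ij x_ij / (x_i x_j). For two points x, y of \<Gamma> with the same support this gives
  H(x) x_i y_ij / y_i = H(y) y_j x_ij / x_j for all i, j, and summing over i and j (using
  \<Sum>_i x_i = \<Sum>_i y_i = 1 and symmetry) yields H(x) = H(y). Hence H takes only finitely many
  values on \<Gamma>. The same formula, for one fixed positive entry, expresses H continuously on a
  relatively open neighbourhood in \<Gamma>, so H is continuous on \<Gamma>; a continuous function with
  finite range is constant on connected sets.\<close>

lemma entry_le_vdeg:
  assumes "\<forall>i j. x (i,j) \<ge> (0::real)"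
  shows "x (i,j) \<le> vdeg x i"
  unfolding vdeg_def by (rule member_le_sum) (simp_all add: assms)

lemma vdeg_nonneg:
  assumes "\<forall>i j. x (i,j) \<ge> (0::real)"
  shows "0 \<le> vdeg x i"
  unfolding vdeg_def by (rule sum_nonneg) (simp add: assms)

lemma vdeg_pos_iff:
  assumes "\<forall>i j. x (i,j) \<ge> (0::real)"
  shows "vdeg x i > 0 \<longleftrightarrow> (\<exists>j. x (i,j) > 0)"
proof
  assume "vdeg x i > 0"
  then show "\<exists>j. x (i,j) > 0"
    unfolding vdeg_def by (metis not_less sum_nonpos)
next
  assume "\<exists>j. x (i,j) > 0"
  then show "vdeg x i > 0"
    using entry_le_vdeg[OF assms] by (meson less_le_trans)
qed

lemma vdeg_pos_if_entry_pos:
  assumes "\<forall>i j. x (i,j) \<ge> (0::real)" "\<forall>i j. x (i,j) = x (j,i)" "x (i,j) > 0"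
  shows "vdeg x i > 0" "vdeg x j > 0"
  using assms entry_le_vdeg[OF assms(1), of i j] entry_le_vdeg[OF assms(1), of j i] by auto

lemma sum_vdeg: "(\<Sum>i\<in>UNIV. vdeg x i) = (\<Sum>ij\<in>UNIV. x ij)"
  unfolding vdeg_def
  by (simp add: sum.cartesian_product[of "\<lambda>i j. x (i,j)"] case_prod_eta flip: UNIV_Times_UNIV)

lemma sum_rows_normalized:
  fixes y :: "'v::finite \<times> 'v \<Rightarrow> real"
  assumes "\<And>i. vdeg y i = 0 \<Longrightarrow> w i = 0"
  shows "(\<Sum>i\<in>UNIV. \<Sum>j\<in>UNIV. w i * y (i,j) / vdeg y i) = (\<Sum>i\<in>UNIV. w i)"
proof (rule sum.cong[OF refl])
  fix i
  have "(\<Sum>j\<in>UNIV. w i * y (i,j) / vdeg y i) = w i * vdeg y i / vdeg y i"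
    unfolding vdeg_def by (simp add: sum_divide_distrib sum_distrib_left)
  also have "\<dots> = w i"
    using assms[of i] by (cases "vdeg y i = 0") simp_all
  finally show "(\<Sum>j\<in>UNIV. w i * y (i,j) / vdeg y i) = w i" .
qed

lemma finite_image_if_factors:
  assumes "finite (g ` A)" and "\<And>x y. x \<in> A \<Longrightarrow> y \<in> A \<Longrightarrow> g x = g y \<Longrightarrow> f x = f y"
  shows "finite (f ` A)"
proof -
  have "f ` A \<subseteq> (\<lambda>s. f (SOME x. x \<in> A \<and> g x = s)) ` (g ` A)"
  proof
    fix v assume "v \<in> f ` A"
    then obtain x where x: "x \<in> A" "v = f x" by blast
    define z where "z = (SOME z. z \<in> A \<and> g z = g x)"
    have "z \<in> A \<and> g z = g x"
      unfolding z_def by (rule someI[where x = x]) (simp add: x(1))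
    then have "v = f z"
      using x assms(2)[of x z] by simp
    then show "v \<in> (\<lambda>s. f (SOME x. x \<in> A \<and> g x = s)) ` (g ` A)"
      unfolding z_def using x(1) by blast
  qed
  then show ?thesis
    using assms(1) by (rule finite_subset[OF _ finite_imageI])
qed

lemma ratio_of_weight_nonzero:
  "a i j * p i j \<noteq> 0 \<Longrightarrow> ratio a p x i j = a i j * p i j * x (i,j) / (vdeg x i * vdeg x j)"
  unfolding ratio_def by simp

lemma Gamma_D:
  assumes "x \<in> Gamma adj a p h1"
  shows "\<forall>i j. x (i,j) \<ge> 0" "\<forall>i j. x (i,j) = x (j,i)" "(\<Sum>ij\<in>UNIV. x ij) = 1"
    and "(\<Sum>(i,j)\<in>{(i,j). a i j * p i j > 0}. x (i,j)) \<ge> h1"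
    and "x (i,j) \<noteq> 0 \<Longrightarrow> ratio a p x i j = Hfun a p x"
proof -
  show "\<forall>i j. x (i,j) \<ge> 0" "\<forall>i j. x (i,j) = x (j,i)" "(\<Sum>ij\<in>UNIV. x ij) = 1"
    "(\<Sum>(i,j)\<in>{(i,j). a i j * p i j > 0}. x (i,j)) \<ge> h1"
    using assms unfolding Gamma_def Delta_def by auto
  have "Ffun a p x (i,j) = 0"
    using assms unfolding Gamma_def by simp
  then show "x (i,j) \<noteq> 0 \<Longrightarrow> ratio a p x i j = Hfun a p x"
    unfolding Ffun_def by simp
qed

context
  fixes adj :: "'v::finite \<Rightarrow> 'v \<Rightarrow> bool" and a p :: "'v \<Rightarrow> 'v \<Rightarrow> real" and h1 :: real
  assumes weights_nonneg: "\<And>i j. 0 \<le> a i j * p i j" and h1_pos: "0 < h1"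
begin

lemma Gamma_obtain_weighted_entry:
  assumes "x \<in> Gamma adj a p h1"
  obtains k l where "a k l * p k l > 0" "x (k,l) > 0"
proof -
  have "0 < sum x {(i,j). a i j * p i j > 0}"
    using Gamma_D(4)[OF assms] h1_pos by (simp add: case_prod_eta)
  then obtain kl where "kl \<in> {(i,j). a i j * p i j > 0}" "x kl > 0"
    by (meson not_less sum_nonpos)
  with that show ?thesis by blast
qed

lemma Hfun_pos_Gamma:
  assumes x: "x \<in> Gamma adj a p h1"
  shows "Hfun a p x > 0"
proof -
  obtain k l where kl: "a k l * p k l > 0" "x (k,l) > 0"
    using Gamma_obtain_weighted_entry[OF x] .
  have "a k l * p k l \<noteq> 0"
    using kl(1) by linarith
  then have "ratio a p x k l = a k l * p k l * x (k,l) / (vdeg x k * vdeg x l)"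
    by (rule ratio_of_weight_nonzero)
  also have "\<dots> > 0"
    using kl vdeg_pos_if_entry_pos[OF Gamma_D(1,2)[OF x] kl(2)] by simp
  finally have "ratio a p x k l > 0" .
  with Gamma_D(5)[OF x] kl(2) show ?thesis by simp
qed

lemma Gamma_weight_pos:
  assumes x: "x \<in> Gamma adj a p h1" and "x (i,j) > 0"
  shows "a i j * p i j > 0"
proof -
  \<comment> \<open>ratio is 0 by convention when the weight vanishes, but on the support it equals H(x) > 0\<close>
  have "ratio a p x i j \<noteq> 0"
    using Gamma_D(5)[OF x] Hfun_pos_Gamma[OF x] assms(2) by simp
  then show ?thesis
    using weights_nonneg[of i j] unfolding ratio_def by (auto simp: less_le)
qed

lemma Gamma_Hfun_eq:
  assumes x: "x \<in> Gamma adj a p h1" and "x (i,j) > 0"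
  shows "Hfun a p x = a i j * p i j * x (i,j) / (vdeg x i * vdeg x j)"
proof -
  have "a i j * p i j \<noteq> 0"
    using Gamma_weight_pos[OF assms] by linarith
  then have "ratio a p x i j = a i j * p i j * x (i,j) / (vdeg x i * vdeg x j)"
    by (rule ratio_of_weight_nonzero)
  moreover have "ratio a p x i j = Hfun a p x"
    using Gamma_D(5)[OF x] assms(2) by simp
  ultimately show ?thesis by simp
qed

lemma Hfun_eq_if_same_support:
  assumes x: "x \<in> Gamma adj a p h1" and y: "y \<in> Gamma adj a p h1"
    and supp: "\<And>ij. x ij > 0 \<longleftrightarrow> y ij > 0"
  shows "Hfun a p x = Hfun a p y"
proof -
  define hx hy where "hx = Hfun a p x" and "hy = Hfun a p y"
  note nx = Gamma_D(1)[OF x] and ny = Gamma_D(1)[OF y]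
  have vdeg_pos: "vdeg x i > 0 \<longleftrightarrow> vdeg y i > 0" for i
    using supp vdeg_pos_iff[OF nx] vdeg_pos_iff[OF ny] by auto
  have vdeg_zero: "vdeg x i = 0 \<longleftrightarrow> vdeg y i = 0" for i
    using vdeg_pos[of i] vdeg_nonneg[OF nx, of i] vdeg_nonneg[OF ny, of i] by linarith
  have key: "hx * vdeg x i * y (i,j) / vdeg y i = hy * vdeg y j * x (i,j) / vdeg x j" for i j
  proof (cases "x (i,j) > 0")
    case True
    then have "y (i,j) > 0" using supp by blast
    have "vdeg x i > 0" "vdeg x j > 0" "vdeg y i > 0" "vdeg y j > 0"
      using vdeg_pos_if_entry_pos[OF Gamma_D(1,2)[OF x] True]
        vdeg_pos_if_entry_pos[OF Gamma_D(1,2)[OF y] \<open>y (i,j) > 0\<close>] by auto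
    then show ?thesis
      unfolding hx_def hy_def Gamma_Hfun_eq[OF x True] Gamma_Hfun_eq[OF y \<open>y (i,j) > 0\<close>]
      by (simp add: field_simps)
  next
    case False
    then have "x (i,j) = 0" "y (i,j) = 0"
      using supp nx ny by (meson antisym not_less)+
    then show ?thesis by simp
  qed
  have "hx = (\<Sum>i\<in>UNIV. hx * vdeg x i)"
    using sum_vdeg[of x] Gamma_D(3)[OF x] by (simp flip: sum_distrib_left)
  also have "\<dots> = (\<Sum>i\<in>UNIV. \<Sum>j\<in>UNIV. hx * vdeg x i * y (i,j) / vdeg y i)"
    by (intro sum_rows_normalized[symmetric]) (simp add: vdeg_zero)
  also have "\<dots> = (\<Sum>j\<in>UNIV. \<Sum>i\<in>UNIV. hy * vdeg y j * x (j,i) / vdeg x j)"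
    unfolding key using Gamma_D(2)[OF x] by (subst sum.swap) simp
  also have "\<dots> = (\<Sum>j\<in>UNIV. hy * vdeg y j)"
    by (intro sum_rows_normalized) (simp add: vdeg_zero)
  also have "\<dots> = hy"
    using sum_vdeg[of y] Gamma_D(3)[OF y] by (simp flip: sum_distrib_left)
  finally show ?thesis unfolding hx_def hy_def .
qed

lemma finite_Hfun_image_Gamma: "finite (Hfun a p ` Gamma adj a p h1)"
proof (rule finite_image_if_factors[where g = "\<lambda>x. {ij. x ij > 0}"])
  fix x y assume "x \<in> Gamma adj a p h1" "y \<in> Gamma adj a p h1" "{ij. x ij > 0} = {ij. y ij > 0}"
  then show "Hfun a p x = Hfun a p y"
    by (intro Hfun_eq_if_same_support) (auto simp: set_eq_iff)
qed simp

lemma continuous_on_Hfun_Gamma: "continuous_on (Gamma adj a p h1) (Hfun a p)"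
  unfolding continuous_on_def
proof
  fix x assume x: "x \<in> Gamma adj a p h1"
  let ?G = "Gamma adj a p h1"
  obtain i j where ij: "a i j * p i j > 0" "x (i,j) > 0"
    using Gamma_obtain_weighted_entry[OF x] .
  define g where "g = (\<lambda>y. a i j * p i j * y (i,j) / (vdeg y i * vdeg y j))"
  have "vdeg x i > 0" "vdeg x j > 0"
    using vdeg_pos_if_entry_pos[OF Gamma_D(1,2)[OF x] ij(2)] .
  moreover have proj: "((\<lambda>y. y k) \<longlongrightarrow> x k) (at x within ?G)" for k
  proof -
    have "continuous_on UNIV (\<lambda>y::'v \<times> 'v \<Rightarrow> real. y k)"
      by simp
    then show ?thesis
      using continuous_on_subset[OF _ subset_UNIV] x unfolding continuous_on_def by blast
  qed
  moreover have "((\<lambda>y. vdeg y k) \<longlongrightarrow> vdeg x k) (at x within ?G)" for k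
    unfolding vdeg_def by (intro tendsto_sum proj)
  ultimately have "(g \<longlongrightarrow> g x) (at x within ?G)"
    unfolding g_def by (intro tendsto_divide tendsto_mult tendsto_const proj) simp_all
  then have "(g \<longlongrightarrow> Hfun a p x) (at x within ?G)"
    unfolding g_def Gamma_Hfun_eq[OF x ij(2)] .
  then show "(Hfun a p \<longlongrightarrow> Hfun a p x) (at x within ?G)"
  proof (rule Lim_transform_within_openin)
    show "openin (top_of_set ?G) (?G \<inter> {y. 0 < y (i,j)})"
      by (intro openin_open_Int open_Collect_less) (simp_all add: continuous_on_const)
    show "x \<in> ?G \<inter> {y. 0 < y (i,j)}" using x ij by simp
  qed (auto simp: g_def Gamma_Hfun_eq)
qed

end

theorem proposition5:
  fixes adj :: "'v::finite \<Rightarrow> 'v \<Rightarrow> bool"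
    and a p :: "'v \<Rightarrow> 'v \<Rightarrow> real" and h1 :: real
  assumes "\<And>i j. adj i j = adj j i"
    and "\<And>i j. a i j = a j i" and "\<And>i j. a i j \<ge> 0"
    and "\<And>i j. a i j > 0 \<Longrightarrow> adj i j"
    and "\<And>i j. p i j = p j i" and "\<And>i j. 0 \<le> p i j \<and> p i j \<le> 1"
    and "\<And>i j. \<not> adj i j \<Longrightarrow> p i j = 0"
    and "\<exists>i j. a i j * p i j > 0"
    and "0 < h1" and "h1 \<le> 1"
    and "connected_component (Gamma adj a p h1) x y"
  shows "Hfun a p x = Hfun a p y"
proof -
  \<comment> \<open>only nonnegativity of the weights a_ij p_ij and h1 > 0 are needed\<close>
  have weights: "\<And>i j. 0 \<le> a i j * p i j"
    using assms(3,6) by simp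
  obtain T where T: "connected T" "T \<subseteq> Gamma adj a p h1" "x \<in> T" "y \<in> T"
    using assms(11) unfolding connected_component_def by blast
  have cont: "continuous_on (Gamma adj a p h1) (Hfun a p)"
    by (rule continuous_on_Hfun_Gamma) (use weights assms(9) in auto)
  have fin: "finite (Hfun a p ` Gamma adj a p h1)"
    by (rule finite_Hfun_image_Gamma) (use weights assms(9) in auto)
  have "Hfun a p constant_on T"
    using continuous_finite_range_constant[OF T(1) continuous_on_subset[OF cont T(2)]]
      finite_subset[OF image_mono[OF T(2)] fin] by blast
  then show ?thesis
    using T(3,4) unfolding constant_on_def by metis
qed

end
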